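(* For every $n\in\mathbb{N}$, every proper subinterval of $I_{n+1}$ is a subinterval of $I_n$ or of $\ell_nI_n$.
   Context: $\mathbb{F}$ is the free group on generators $a,b$ with identity $e$. For $n=4k+i$ with $k\in\mathbb{N}$ and $0\le i<4$, set $\ell_n=a,a^{-1},b,b^{-1}$ according as $i=0,1,2,3$. For $g\in\mathbb{F}$ and $S\subseteq\mathbb{F}$ let $gS=\{gs:s\in S\}$. Define $I_0=\{e\}$ and $I_{n+1}=I_n\cup\ell_nI_n$. An interval of $\mathbb{F}$ is either the empty set or a set of the form $wI_n$ with $w\in\mathbb{F}$, $n\in\mathbb{N}$; $\mathbb{I}$ denotes the set of intervals. If $I,J\in\mathbb{I}$ and $J\subseteq I$, $J$ is a subinterval of $I$, written $J\le I$. *)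

theory Defs
  imports Main
begin

text \<open>The free group F on generators a, b, modelled by freely reduced words.
  A letter is a generator together with a sign: (A, True) is a, (A, False) is a^-1.\<close>

datatype gen = A | B

type_synonym letter = "gen \<times> bool"

definition inv_letter :: "letter \<Rightarrow> letter" where
  "inv_letter x = (fst x, \<not> snd x)"

fun cons_red :: "letter \<Rightarrow> letter list \<Rightarrow> letter list" where
  "cons_red x [] = [x]"
| "cons_red x (y # ys) = (if y = inv_letter x then ys else x # y # ys)"

definition reduce :: "letter list \<Rightarrow> letter list" where
  "reduce w = foldr cons_red w []"

fun reduced :: "letter list \<Rightarrow> bool" where
  "reduced [] = True"
| "reduced [x] = True"
| "reduced (x # y # ys) = (y \<noteq> inv_letter x \<and> reduced (y # ys))"

typedef fgroup = "{w :: letter list. reduced w}"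
  by (rule exI[of _ "[]"]) simp

definition fmult :: "fgroup \<Rightarrow> fgroup \<Rightarrow> fgroup" (infixl "\<cdot>" 70) where
  "g \<cdot> h = Abs_fgroup (reduce (Rep_fgroup g @ Rep_fgroup h))"

definition fe :: fgroup where "fe = Abs_fgroup []"

definition fa :: fgroup where "fa = Abs_fgroup [(A, True)]"
definition fa_inv :: fgroup where "fa_inv = Abs_fgroup [(A, False)]"
definition fb :: fgroup where "fb = Abs_fgroup [(B, True)]"
definition fb_inv :: fgroup where "fb_inv = Abs_fgroup [(B, False)]"

definition ell :: "nat \<Rightarrow> fgroup" where
  "ell n = (if n mod 4 = 0 then fa else if n mod 4 = 1 then fa_inv
            else if n mod 4 = 2 then fb else fb_inv)"

definition lmult :: "fgroup \<Rightarrow> fgroup set \<Rightarrow> fgroup set" where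
  "lmult g S = (\<lambda>s. g \<cdot> s) ` S"

fun Iv :: "nat \<Rightarrow> fgroup set" where
  "Iv 0 = {fe}"
| "Iv (Suc n) = Iv n \<union> lmult (ell n) (Iv n)"

definition intervals :: "fgroup set set" where
  "intervals = {{}} \<union> {lmult w (Iv n) | w n. True}"

definition subinterval :: "fgroup set \<Rightarrow> fgroup set \<Rightarrow> bool" where
  "subinterval J I \<longleftrightarrow> I \<in> intervals \<and> J \<in> intervals \<and> J \<subseteq> I"

end

theory Submission
  imports Defs
begin

text \<open>Unfolding the recursion, I_{p+t} is the union of the translates x I_p over a set of
  offsets R_p(t), with R_p(0) = {e} and R_p(t+1) = R_p(t) \<union> \<ell>_{p+t} R_p(t). The heart of the
  proof is the converse: w I_p \<subseteq> I_{p+t} forces w \<in> R_p(t). By induction on p, peeling off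
  I_{p+1} = I_p \<union> \<ell>_p I_p, the only case the induction hypothesis leaves open is that v and
  v \<ell>_p^2 are offsets while v \<ell>_p is not. This is impossible because offset sets are
  geodesically convex for the word metric: the Cayley graph of F is a tree, and in a tree two
  convex sets joined by an edge have a convex union. For a subinterval w I_p of I_{n+1} with
  p \<le> n we get w \<in> R_p(n-p) \<union> \<ell>_n R_p(n-p), i.e. w I_p lies in I_n or in \<ell>_n I_n; for
  p > n the inclusion forces w = e and w I_p = I_{n+1}.\<close>

subsection \<open>Free reduction\<close>

lemma inv_letter_inv_letter [simp]: "inv_letter (inv_letter x) = x"
  by (simp add: inv_letter_def)

lemma inv_letter_neq [simp]: "inv_letter x \<noteq> x" "x \<noteq> inv_letter x"
  by (auto simp: inv_letter_def prod_eq_iff)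

lemma reduced_iff_successively: "reduced xs \<longleftrightarrow> successively (\<lambda>x y. y \<noteq> inv_letter x) xs"
  by (induction xs rule: reduced.induct) auto

lemma reduced_ConsD: "reduced (y # ys) \<Longrightarrow> reduced ys"
  by (cases ys) auto

lemma reduced_cons_red: "reduced ys \<Longrightarrow> reduced (cons_red x ys)"
  by (cases ys) (auto dest: reduced_ConsD)

lemma reduced_foldr_cons_red: "reduced z \<Longrightarrow> reduced (foldr cons_red xs z)"
  by (induction xs) (auto intro: reduced_cons_red)

lemma reduced_reduce: "reduced (reduce w)"
  unfolding reduce_def by (rule reduced_foldr_cons_red) simp

lemma reduce_reduced: "reduced w \<Longrightarrow> reduce w = w"
  by (induction w rule: reduced.induct) (simp_all add: reduce_def)

lemma reduce_append: "reduce (xs @ ys) = foldr cons_red xs (reduce ys)"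
  by (simp add: reduce_def)

lemma reduced_rev_map_inv_letter: "reduced w \<Longrightarrow> reduced (rev (map inv_letter w))"
  unfolding reduced_iff_successively successively_rev successively_map
  by (erule successively_mono) (metis inv_letter_inv_letter)

lemma cons_red_cons_red_inv_letter: "reduced ys \<Longrightarrow> cons_red x (cons_red (inv_letter x) ys) = ys"
  by (cases ys rule: remdups_adj.cases) (auto dest: reduced_ConsD)

lemma foldr_cons_red_cons_red:
  assumes "reduced r" "reduced z"
  shows "foldr cons_red (cons_red x r) z = cons_red x (foldr cons_red r z)"
proof (cases r)
  case (Cons y r')
  then show ?thesis
    using cons_red_cons_red_inv_letter[OF reduced_foldr_cons_red[OF assms(2)], of x r'] by auto
qed simp

lemma foldr_cons_red_reduce: "reduced z \<Longrightarrow> foldr cons_red (reduce xs) z = foldr cons_red xs z"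
  by (induction xs)
    (simp_all add: reduce_def foldr_cons_red_cons_red[OF reduced_reduce[unfolded reduce_def]])

lemma foldr_cons_red_inverse:
  "reduced z \<Longrightarrow> foldr cons_red (rev (map inv_letter w)) (foldr cons_red w z) = z"
proof (induction w arbitrary: z)
  case (Cons x w)
  then show ?case
    using cons_red_cons_red_inv_letter[OF reduced_foldr_cons_red[OF Cons.prems], of "inv_letter x" w]
    by simp
qed simp

lemma foldr_cons_red_reduced_append: "reduced (xs @ ys) \<Longrightarrow> foldr cons_red xs ys = xs @ ys"
proof (induction xs)
  case (Cons x xs)
  then have "foldr cons_red xs ys = xs @ ys" by (auto dest: reduced_ConsD)
  with Cons.prems show ?case by (cases "xs @ ys") auto
qed simp

lemma length_foldr_cons_red: "length (foldr cons_red xs ys) \<le> length xs + length ys"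
proof (induction xs)
  case (Cons x xs)
  have "length (cons_red x zs) \<le> Suc (length zs)" for zs by (cases zs) auto
  from this[of "foldr cons_red xs ys"] Cons.IH show ?case by simp
qed simp

subsection \<open>The group structure\<close>

lemma reduced_Rep_fgroup [simp]: "reduced (Rep_fgroup g)"
  using Rep_fgroup by simp

lemma Rep_fgroup_fmult: "Rep_fgroup (g \<cdot> h) = reduce (Rep_fgroup g @ Rep_fgroup h)"
  unfolding fmult_def by (simp add: Abs_fgroup_inverse reduced_reduce)

lemma Rep_fgroup_fe [simp]: "Rep_fgroup fe = []"
  unfolding fe_def by (simp add: Abs_fgroup_inverse)

definition finv :: "fgroup \<Rightarrow> fgroup" where
  "finv g = Abs_fgroup (rev (map inv_letter (Rep_fgroup g)))"

lemma Rep_fgroup_finv: "Rep_fgroup (finv g) = rev (map inv_letter (Rep_fgroup g))"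
  unfolding finv_def by (simp add: Abs_fgroup_inverse reduced_rev_map_inv_letter)

instantiation fgroup :: group_add
begin

definition "plus_fgroup = fmult"
definition "zero_fgroup = fe"
definition "uminus_fgroup = finv"
definition "minus_fgroup g h = fmult g (finv h)"

instance
proof
  fix a b c :: fgroup
  let ?A = "Rep_fgroup a" and ?B = "Rep_fgroup b" and ?C = "Rep_fgroup c"
  have "reduce (reduce (?A @ ?B) @ ?C) = foldr cons_red (?A @ ?B) (reduce ?C)"
    by (subst reduce_append, rule foldr_cons_red_reduce[OF reduced_reduce])
  also have "\<dots> = reduce (?A @ reduce (?B @ ?C))"
    by (simp add: reduce_append reduce_reduced reduced_foldr_cons_red reduced_reduce)
  finally show "a + b + c = a + (b + c)"
    unfolding plus_fgroup_def Rep_fgroup_inject[symmetric] Rep_fgroup_fmult .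
  show "0 + a = a" "a + 0 = a"
    unfolding plus_fgroup_def fmult_def zero_fgroup_def
    by (simp_all add: reduce_reduced Rep_fgroup_inverse)
  show "- a + a = 0"
    unfolding plus_fgroup_def fmult_def zero_fgroup_def uminus_fgroup_def
    using foldr_cons_red_inverse[of "[]" ?A] reduce_reduced[of ?A, unfolded reduce_def]
    by (simp add: Rep_fgroup_finv reduce_append reduce_reduced fe_def)
  show "a + - b = a - b"
    by (simp add: plus_fgroup_def uminus_fgroup_def minus_fgroup_def)
qed

end

lemma Rep_fgroup_zero [simp]: "Rep_fgroup 0 = []"
  by (simp add: zero_fgroup_def)

lemma lmult_eq_image [simp]: "lmult g S = (+) g ` S"
  by (simp add: lmult_def plus_fgroup_def)

lemma Rep_fgroup_minus_add:
  "Rep_fgroup (- g + h) = foldr cons_red (rev (map inv_letter (Rep_fgroup g))) (Rep_fgroup h)"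
  by (simp add: plus_fgroup_def uminus_fgroup_def Rep_fgroup_fmult Rep_fgroup_finv
      reduce_append reduce_reduced)

subsection \<open>The word metric\<close>

definition len :: "fgroup \<Rightarrow> nat" where
  "len g = length (Rep_fgroup g)"

lemma len_eq_0_iff [simp]: "len g = 0 \<longleftrightarrow> g = 0"
  by (metis Rep_fgroup_inject Rep_fgroup_zero len_def length_0_conv)

lemma len_uminus [simp]: "len (- g) = len g"
  by (simp add: len_def uminus_fgroup_def Rep_fgroup_finv)

lemma len_minus_add_eq_iff:
  "len (- g + h) = len g + len h \<longleftrightarrow>
     Rep_fgroup g = [] \<or> Rep_fgroup h = [] \<or> hd (Rep_fgroup g) \<noteq> hd (Rep_fgroup h)"
  (is "_ \<longleftrightarrow> ?diverge")
proof (cases ?diverge)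
  case True
  let ?G = "Rep_fgroup g" and ?H = "Rep_fgroup h"
  have "reduced (rev (map inv_letter ?G) @ ?H)"
    unfolding reduced_iff_successively successively_append_iff
    using True reduced_rev_map_inv_letter[of ?G] reduced_Rep_fgroup[of g] reduced_Rep_fgroup[of h]
    by (auto simp: reduced_iff_successively last_rev hd_map)
  then have "Rep_fgroup (- g + h) = rev (map inv_letter ?G) @ ?H"
    by (simp add: Rep_fgroup_minus_add foldr_cons_red_reduced_append)
  with True show ?thesis by (simp add: len_def)
next
  case False
  then obtain x G H where G: "Rep_fgroup g = x # G" and H: "Rep_fgroup h = x # H"
    by (cases "Rep_fgroup g"; cases "Rep_fgroup h") auto
  have "Rep_fgroup (- g + h) = foldr cons_red (rev (map inv_letter G)) H"
    unfolding Rep_fgroup_minus_add G H by simp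
  then have "len (- g + h) \<le> length G + length H"
    using length_foldr_cons_red[of "rev (map inv_letter G)" H] by (simp add: len_def)
  with False G H show ?thesis by (simp add: len_def)
qed

definition word_dist :: "fgroup \<Rightarrow> fgroup \<Rightarrow> nat" where
  "word_dist x y = len (- x + y)"

lemma word_dist_add_left [simp]: "word_dist (g + x) (g + y) = word_dist x y"
  by (simp add: word_dist_def minus_add add.assoc[symmetric])

lemma word_dist_commute: "word_dist x y = word_dist y x"
  by (metis word_dist_def len_uminus minus_add minus_minus)

lemma word_dist_0 [simp]: "word_dist 0 x = len x" "word_dist x 0 = len x"
  by (simp_all add: word_dist_def)

lemma word_dist_eq_0_iff [simp]: "word_dist x y = 0 \<longleftrightarrow> x = y"
  by (auto simp: word_dist_def) (metis add_minus_cancel add.right_neutral)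

lemma word_dist_self [simp]: "word_dist x x = 0"
  by simp

definition between :: "fgroup \<Rightarrow> fgroup \<Rightarrow> fgroup \<Rightarrow> bool" where
  "between x z y \<longleftrightarrow> word_dist x z + word_dist z y = word_dist x y"

lemma between_add_left [simp]: "between (g + x) (g + z) (g + y) \<longleftrightarrow> between x z y"
  by (simp add: between_def)

lemma between_same [simp]: "between x z x \<longleftrightarrow> z = x"
  unfolding between_def by (metis add_is_0 word_dist_eq_0_iff word_dist_self)

lemma between_commute: "between x z y \<longleftrightarrow> between y z x"
  by (simp add: between_def word_dist_commute add.commute)

text \<open>The tree property: by len_minus_add_eq_iff, 0 lies between x and y iff their reduced words
  start with different letters, and no w can start with the same letter as both.\<close>

lemma between_tripod_0: "between x 0 y \<Longrightarrow> between x 0 w \<or> between w 0 y"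
  using len_minus_add_eq_iff[of x y] len_minus_add_eq_iff[of x w] len_minus_add_eq_iff[of w y]
  by (auto simp: between_def word_dist_def eq_commute)

lemma between_tripod: "between x z y \<Longrightarrow> between x z w \<or> between w z y"
  using between_tripod_0[of "- z + x" "- z + y" "- z + w"]
  by (metis between_add_left left_minus)

definition geodesically_convex :: "fgroup set \<Rightarrow> bool" where
  "geodesically_convex M \<longleftrightarrow> (\<forall>x\<in>M. \<forall>y\<in>M. \<forall>z. between x z y \<longrightarrow> z \<in> M)"

lemma geodesically_convexD:
  "geodesically_convex M \<Longrightarrow> x \<in> M \<Longrightarrow> y \<in> M \<Longrightarrow> between x z y \<Longrightarrow> z \<in> M"
  unfolding geodesically_convex_def by blast

lemma geodesically_convex_translate:
  assumes "geodesically_convex M"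
  shows "geodesically_convex ((+) g ` M)"
  unfolding geodesically_convex_def
proof (clarify)
  fix x y z
  assume "x \<in> M" "y \<in> M" "between (g + x) z (g + y)"
  then have "- g + z \<in> M"
    using geodesically_convexD[OF assms] by (metis add_minus_cancel between_add_left)
  then show "z \<in> (+) g ` M"
    by (metis add_minus_cancel image_eqI)
qed

lemma geodesically_convex_Un:
  assumes M1: "geodesically_convex M1" and M2: "geodesically_convex M2"
    and w: "w \<in> M1" "w \<in> M2"
  shows "geodesically_convex (M1 \<union> M2)"
proof -
  have cross: "z \<in> M1 \<union> M2" if "x \<in> M1" "y \<in> M2" "between x z y" for x y z
    using between_tripod[OF that(3), of w] geodesically_convexD[OF M1 that(1) w(1)]
      geodesically_convexD[OF M2 w(2) that(2)]
    by blast
  show ?thesis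
    unfolding geodesically_convex_def
  proof (intro ballI allI impI)
    fix x y z
    assume "x \<in> M1 \<union> M2" "y \<in> M1 \<union> M2" "between x z y"
    then show "z \<in> M1 \<union> M2"
      using cross[of x y z] cross[of y x z] between_commute[of x z y]
        geodesically_convexD[OF M1, of x y z] geodesically_convexD[OF M2, of x y z]
      by blast
  qed
qed

lemma geodesically_convex_singleton: "geodesically_convex {x}"
  by (simp add: geodesically_convex_def)

lemma geodesically_convex_edge:
  assumes "word_dist x y = 1"
  shows "geodesically_convex {x, y}"
proof -
  have mid: "z \<in> {x, y}" if "between x z y" for z
  proof -
    have "word_dist x z = 0 \<or> word_dist z y = 0"
      using that assms by (auto simp: between_def simp del: word_dist_eq_0_iff)
    then show ?thesis
      by auto
  qed
  show ?thesis
    unfolding geodesically_convex_def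
  proof (intro ballI allI impI)
    fix u v z
    assume "u \<in> {x, y}" "v \<in> {x, y}" "between u z v"
    with mid[of z] show "z \<in> {x, y}"
      by (auto simp: between_commute[of y z x])
  qed
qed

lemma geodesically_convex_Un_edge:
  assumes "geodesically_convex M1" "geodesically_convex M2"
    and "x \<in> M1" "y \<in> M2" "word_dist x y = 1"
  shows "geodesically_convex (M1 \<union> M2)"
proof -
  have "geodesically_convex (M1 \<union> {x, y})"
    using geodesically_convex_Un[OF assms(1) geodesically_convex_edge[OF assms(5)]] assms(3) by blast
  then have "geodesically_convex ((M1 \<union> {x, y}) \<union> M2)"
    using geodesically_convex_Un[OF _ assms(2)] assms(4) by blast
  moreover have "(M1 \<union> {x, y}) \<union> M2 = M1 \<union> M2"
    using assms(3,4) by blast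
  ultimately show ?thesis by simp
qed

subsection \<open>The intervals\<close>

lemma Rep_fgroup_ell: "\<exists>x. Rep_fgroup (ell n) = [x]"
proof -
  have "Rep_fgroup (Abs_fgroup [x]) = [x]" for x
    by (simp add: Abs_fgroup_inverse)
  then show ?thesis
    unfolding ell_def fa_def fa_inv_def fb_def fb_inv_def by auto
qed

lemma len_ell [simp]: "len (ell n) = 1"
  using Rep_fgroup_ell[of n] by (auto simp: len_def)

lemma between_ell: "between v (v + ell n) (v + ell n + ell n)"
proof -
  obtain x where x: "Rep_fgroup (ell n) = [x]"
    using Rep_fgroup_ell by blast
  have "Rep_fgroup (ell n + ell n) = [x, x]"
    by (simp add: plus_fgroup_def Rep_fgroup_fmult x reduce_def)
  then have "len (ell n + ell n) = 2"
    by (simp add: len_def)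
  then have "between 0 (ell n) (ell n + ell n)"
    by (simp add: between_def word_dist_def add.assoc[symmetric])
  then show ?thesis
    by (metis between_add_left add.right_neutral add.assoc)
qed

lemma Iv_mono: "m \<le> n \<Longrightarrow> Iv m \<subseteq> Iv n"
  by (rule lift_Suc_mono_le[of Iv]) auto

fun offsets :: "nat \<Rightarrow> nat \<Rightarrow> fgroup set" where
  "offsets p 0 = {0}"
| "offsets p (Suc t) = offsets p t \<union> (+) (ell (p + t)) ` offsets p t"

lemma zero_in_offsets: "0 \<in> offsets p t"
  by (induction t) auto

lemma geodesically_convex_offsets: "geodesically_convex (offsets p t)"
proof (induction t)
  case 0
  show ?case
    by (simp add: geodesically_convex_singleton)
next
  case (Suc t)
  have "ell (p + t) \<in> (+) (ell (p + t)) ` offsets p t"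
    using zero_in_offsets by force
  then show ?case
    using geodesically_convex_Un_edge[OF Suc geodesically_convex_translate[OF Suc] zero_in_offsets]
    by simp
qed

lemma Iv_add_eq_UN_offsets: "Iv (p + t) = (\<Union>x\<in>offsets p t. (+) x ` Iv p)"
  by (induction t) (simp_all add: image_UN image_image add.assoc)

lemma offsets_Suc_eq:
  "offsets p (Suc t) = offsets (Suc p) t \<union> (\<lambda>v. v + ell p) ` offsets (Suc p) t"
  by (induction t) (simp_all add: image_Un image_image add.assoc Un_ac)

lemma translate_Iv_subset_iff: "(+) w ` Iv p \<subseteq> Iv (p + t) \<longleftrightarrow> w \<in> offsets p t"
proof
  show "w \<in> offsets p t \<Longrightarrow> (+) w ` Iv p \<subseteq> Iv (p + t)"
    unfolding Iv_add_eq_UN_offsets by blast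
next
  show "(+) w ` Iv p \<subseteq> Iv (p + t) \<Longrightarrow> w \<in> offsets p t"
  proof (induction p arbitrary: w t)
    case 0
    then show ?case
      using Iv_add_eq_UN_offsets[of 0 t] by auto
  next
    case (Suc p)
    let ?l = "ell p" and ?E = "offsets (Suc p) t"
    have split: "offsets p (Suc t) = ?E \<union> (\<lambda>v. v + ?l) ` ?E"
      by (rule offsets_Suc_eq)
    have "(+) w ` Iv (Suc p) \<subseteq> Iv (p + Suc t)"
      using Suc.prems by (simp only: add_Suc_shift)
    moreover have "Iv p \<subseteq> Iv (Suc p)" "(+) ?l ` Iv p \<subseteq> Iv (Suc p)"
      by auto
    moreover have "(+) (w + ?l) ` Iv p = (+) w ` (+) ?l ` Iv p"
      by (simp add: image_image add.assoc)
    ultimately have "(+) w ` Iv p \<subseteq> Iv (p + Suc t)" "(+) (w + ?l) ` Iv p \<subseteq> Iv (p + Suc t)"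
      by (metis image_mono subset_trans)+
    then have w: "w \<in> ?E \<union> (\<lambda>v. v + ?l) ` ?E" and wl: "w + ?l \<in> ?E \<union> (\<lambda>v. v + ?l) ` ?E"
      using Suc.IH split by blast+
    show ?case
    proof (rule ccontr)
      assume "w \<notin> ?E"
      with w obtain v where v: "v \<in> ?E" "w = v + ?l" by auto
      with wl \<open>w \<notin> ?E\<close> have "v + ?l + ?l \<in> ?E" by auto
      with v(1) have "v + ?l \<in> ?E"
        using geodesically_convexD[OF geodesically_convex_offsets _ _ between_ell] by blast
      with v \<open>w \<notin> ?E\<close> show False
        by simp
    qed
  qed
qed

lemma translate_Iv_subset_Iv_Suc:
  assumes sub: "(+) w ` Iv p \<subseteq> Iv (Suc n)" and proper: "(+) w ` Iv p \<noteq> Iv (Suc n)"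
  shows "(+) w ` Iv p \<subseteq> Iv n \<or> (+) w ` Iv p \<subseteq> (+) (ell n) ` Iv n"
proof (cases "p \<le> n")
  case True
  then obtain t where n: "n = p + t"
    using le_Suc_ex by blast
  then have "w \<in> offsets p t \<or> w \<in> (+) (ell n) ` offsets p t"
    using sub translate_Iv_subset_iff[of w p "Suc t"] by auto
  then show ?thesis
  proof
    assume "w \<in> offsets p t"
    then show ?thesis
      using translate_Iv_subset_iff n by blast
  next
    assume "w \<in> (+) (ell n) ` offsets p t"
    then obtain v where "w = ell n + v" "(+) v ` Iv p \<subseteq> Iv n"
      using translate_Iv_subset_iff n by blast
    then show ?thesis
      by (auto simp: add.assoc)
  qed
next
  case False
  then have larger: "Iv (Suc n) \<subseteq> Iv p"
    by (intro Iv_mono) simp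
  with sub have "(+) w ` Iv (Suc n) \<subseteq> Iv (Suc n + 0)"
    by (metis add_0_right image_mono subset_trans)
  then have "w = 0"
    using translate_Iv_subset_iff[of w "Suc n" 0] by (simp del: Iv.simps)
  then have "(+) w ` Iv p = Iv p"
    by (simp add: image_def)
  with sub larger have "(+) w ` Iv p = Iv (Suc n)"
    by blast
  with proper show ?thesis
    by contradiction
qed

theorem lemma2p5:
  fixes n :: nat and J :: "fgroup set"
  assumes "subinterval J (Iv (Suc n))" and "J \<noteq> Iv (Suc n)"
  shows "subinterval J (Iv n) \<or> subinterval J (lmult (ell n) (Iv n))"
proof -
  have J: "J \<in> intervals" "J \<subseteq> Iv (Suc n)"
    using assms(1) by (auto simp: subinterval_def)
  have "Iv n = lmult 0 (Iv n)"
    by simp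
  then have halves: "Iv n \<in> intervals" "lmult (ell n) (Iv n) \<in> intervals"
    unfolding intervals_def by blast+
  have "J \<subseteq> Iv n \<or> J \<subseteq> lmult (ell n) (Iv n)"
  proof (cases "J = {}")
    case False
    with J(1) obtain w p where "J = (+) w ` Iv p"
      by (auto simp: intervals_def)
    with J(2) assms(2) show ?thesis
      using translate_Iv_subset_Iv_Suc[of w p n] by (simp del: Iv.simps)
  qed simp
  with J halves show ?thesis
    by (auto simp: subinterval_def)
qed

end
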